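(* Let $d\ge 2$, $m\ge1$, and for each $u\in\mathbb{R}$, $\mu\in\{1,\ldots,m\}$ let $M_\mu^u\in\mathbb{C}^{d\times d}$ with $\sum_{\mu}(M_\mu^u)^\dagger M_\mu^u=\mathrm{I}$, each $u\mapsto M_\mu^u$ of class $C^2$, and $M_\mu^0=\sum_{n=1}^d c_{\mu,n}|n\rangle\langle n|$ in a fixed orthonormal basis $\{|n\rangle\}$ of $\mathbb{C}^d$. Let $R$ be the $d\times d$ matrix $$R_{n_1,n_2}=\sum_{\mu=1}^m\Big(2\Big|\langle n_1|\tfrac{d (M_\mu^u)^\dagger}{du}\big|_{u=0}|n_2\rangle\Big|^2+2\delta_{n_1,n_2}\,\mathrm{Re}\Big(c_{\mu,n_1}\langle n_1|\tfrac{d^2 (M_\mu^u)^\dagger}{du^2}\big|_{u=0}|n_2\rangle\Big)\Big),$$ and assume the directed graph $G$ of $R$ is strongly connected, i.e., for any $n\neq n'$ in $\{1,\ldots,d\}$ there exist distinct $n_1=n,n_2,\ldots,n_r=n'$ with $R_{n_j,n_{j+1}}\neq0$ for $j=1,\ldots,r-1$. Fix $\bar n\in\{1,\ldots,d\}$. Then there exist $d-1$ strictly positive reals $e_n$, $n\in\{1,\ldots,d\}\setminus\{\bar n\}$, such that: (i) for any reals $\lambda_n$, $n\neq\bar n$, there exists a unique vector $\sigma\in\mathbb{R}^d$ with $\sigma_{\bar n}=0$ and $R\sigma=\lambda$, where $\lambda\in\mathbb{R}^d$ has components $\lambda_n$ for $n\neq\bar n$ and $\lambda_{\bar n}=-\sum_{n\neq\bar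 n}e_n\lambda_n$; if moreover $\lambda_n<0$ for all $n\neq\bar n$, then $\sigma_n>0$ for all $n\neq\bar n$; (ii) for any $\sigma\in\mathbb{R}^d$ with $R\sigma=\lambda\in\mathbb{R}^d$, the function $V_0(\rho)=\sum_{n=1}^d\sigma_n\langle n|\rho|n\rangle$ satisfies $$\frac{d^2}{du^2}V_0\big(\mathbb{K}^u(|n\rangle\langle n|)\big)\Big|_{u=0}=\lambda_n\quad\text{for all } n\in\{1,\ldots,d\},$$ where $\mathbb{K}^u(\rho)=\sum_{\mu=1}^m M_\mu^u\rho (M_\mu^u)^\dagger$.
   Context: $\dagger$ denotes conjugate transpose; $\delta$ is the Kronecker delta. The directed graph of $R$ has vertices $1,\ldots,d$ and an edge $n_1\to n_2$ for each $n_1\neq n_2$ with $R_{n_1,n_2}>0$. *)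

theory Defs
  imports "HOL-Analysis.Analysis"
begin

text \<open>Matrices in the fixed orthonormal basis are represented by their coordinates:
  the basis vector |n> is the standard basis vector indexed by n :: 'n, so
  <n1|A|n2> = A $ n1 $ n2.\<close>

definition cadj :: "complex^'n^'n \<Rightarrow> complex^'n^'n" where
  "cadj A = (\<chi> i j. cnj (A $ j $ i))"

definition ketbra :: "'n::finite \<Rightarrow> complex^'n^'n" where
  "ketbra n = (\<chi> i j. if i = n \<and> j = n then 1 else 0)"

definition diag_mat :: "('n::finite \<Rightarrow> complex) \<Rightarrow> complex^'n^'n" where
  "diag_mat f = (\<chi> i j. if i = j then f i else 0)"

definition kraus :: "(real \<Rightarrow> 'm::finite \<Rightarrow> complex^'n::finite^'n) \<Rightarrow> real \<Rightarrow> complex^'n^'n \<Rightarrow> complex^'n^'n" where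
  "kraus M u \<rho> = (\<Sum>\<mu>\<in>UNIV. M u \<mu> ** \<rho> ** cadj (M u \<mu>))"

definition dadj1 :: "(real \<Rightarrow> 'm \<Rightarrow> complex^'n::finite^'n) \<Rightarrow> 'm \<Rightarrow> complex^'n^'n" where
  "dadj1 M \<mu> = vector_derivative (\<lambda>u. cadj (M u \<mu>)) (at 0)"

definition dadj2 :: "(real \<Rightarrow> 'm \<Rightarrow> complex^'n::finite^'n) \<Rightarrow> 'm \<Rightarrow> complex^'n^'n" where
  "dadj2 M \<mu> = vector_derivative (\<lambda>v. vector_derivative (\<lambda>u. cadj (M u \<mu>)) (at v)) (at 0)"

definition Rmat :: "(real \<Rightarrow> 'm::finite \<Rightarrow> complex^'n::finite^'n) \<Rightarrow> ('m \<Rightarrow> 'n \<Rightarrow> complex) \<Rightarrow> real^'n^'n" where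
  "Rmat M c = (\<chi> n1 n2. \<Sum>\<mu>\<in>UNIV.
      2 * (cmod (dadj1 M \<mu> $ n1 $ n2))\<^sup>2
      + (if n1 = n2 then 2 * Re (c \<mu> n1 * dadj2 M \<mu> $ n1 $ n2) else 0))"

definition V0 :: "real^'n::finite \<Rightarrow> complex^'n^'n \<Rightarrow> complex" where
  "V0 \<sigma> \<rho> = (\<Sum>n\<in>UNIV. complex_of_real (\<sigma> $ n) * \<rho> $ n $ n)"

definition C2 :: "(real \<Rightarrow> complex^'n::finite^'n) \<Rightarrow> bool" where
  "C2 f \<longleftrightarrow> (\<exists>f1 f2. (\<forall>u. (f has_vector_derivative f1 u) (at u))
      \<and> (\<forall>u. (f1 has_vector_derivative f2 u) (at u)) \<and> continuous_on UNIV f2)"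

definition strongly_connected :: "real^'n::finite^'n \<Rightarrow> bool" where
  "strongly_connected R \<longleftrightarrow> (\<forall>n n'. n \<noteq> n' \<longrightarrow>
     (\<exists>ps. ps \<noteq> [] \<and> distinct ps \<and> hd ps = n \<and> last ps = n' \<and>
        (\<forall>j. j + 1 < length ps \<longrightarrow> R $ (ps ! j) $ (ps ! (j + 1)) \<noteq> 0)))"

end

theory Submission
  imports Defs
begin

text \<open>
  Part (ii) is a direct computation: the k-th diagonal entry of K^u(|n><n|) is
  sum_mu |M_mu^u(k,n)|^2, and since M_mu^0 is diagonal its second derivative at u = 0 is
  the (n,k) entry of R. For sigma = 1, trace preservation makes V_0 constant in u, so R has
  zero row sums; its off-diagonal entries are nonnegative, so R is the generator of a Markov
  chain, irreducible by strong connectivity. Such a matrix satisfies a minimum principle: if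
  sigma_nb = 0 and (R sigma)_k <= 0 for all k ~= nb, then sigma >= 0, because along an edge
  leaving the set where sigma is minimal the row of R at the minimum would be positive. Hence
  sigma |-> (sigma_nb, ((R sigma)_k)_{k ~= nb}) is injective, so bijective. Solving it for the
  right-hand sides -delta_k gives sigma^k >= 0, and e_k = (R sigma^k)_nb is positive since the
  zero set of sigma^k can only be left through an edge out of nb.
\<close>

lemma bounded_linear_cadj: "bounded_linear (cadj :: complex^'n::finite^'n \<Rightarrow> _)"
proof -
  have "linear (cadj :: complex^'n::finite^'n \<Rightarrow> _)"
    by (auto simp: linear_iff cadj_def vec_eq_iff)
  then show ?thesis by (simp add: linear_conv_bounded_linear)
qed

lemma bounded_linear_mat_nth: "bounded_linear (\<lambda>A::'a::real_normed_vector^'n::finite^'k::finite. A $ k $ n)"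
  by (rule bounded_linear_compose[OF bounded_linear_vec_nth bounded_linear_vec_nth])

lemma vector_derivative_twice:
  assumes "\<And>u. (F has_vector_derivative F1 u) (at u)"
    and "\<And>u. (F1 has_vector_derivative F2 u) (at u)"
  shows "vector_derivative (\<lambda>v. vector_derivative F (at v)) (at x) = F2 x"
proof -
  have "(\<lambda>v. vector_derivative F (at v)) = F1"
    using assms(1) vector_derivative_at by blast
  then show ?thesis using assms(2) by (simp add: vector_derivative_at)
qed

lemma dadj1_eq:
  assumes "\<And>u. ((\<lambda>u. M u \<mu>) has_vector_derivative f1 u) (at u)"
  shows "dadj1 M \<mu> = cadj (f1 0)"
  unfolding dadj1_def
  using bounded_linear.has_vector_derivative[OF bounded_linear_cadj assms] vector_derivative_at
  by blast

lemma dadj2_eq: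
  assumes "\<And>u. ((\<lambda>u. M u \<mu>) has_vector_derivative f1 u) (at u)"
    and "\<And>u. (f1 has_vector_derivative f2 u) (at u)"
  shows "dadj2 M \<mu> = cadj (f2 0)"
  unfolding dadj2_def
  by (rule vector_derivative_twice)
    (use bounded_linear.has_vector_derivative[OF bounded_linear_cadj] assms in blast)+

lemma diag_conj_ketbra:
  "(A ** ketbra n ** cadj A) $ k $ k = A $ k $ n * cnj (A $ k $ n)"
proof -
  have col: "A ** ketbra n = (\<chi> i j. if j = n then A $ i $ n else 0)"
    by (auto simp: vec_eq_iff matrix_matrix_mult_def ketbra_def if_distrib cong: if_cong)
  have "\<And>P (a::complex) b. (if P then a else 0) * b = (if P then a * b else 0)" by simp
  then show ?thesis unfolding col by (simp add: matrix_matrix_mult_def cadj_def)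
qed

lemma V0_kraus_ketbra:
  "V0 \<sigma> (kraus M u (ketbra n)) =
     (\<Sum>k\<in>UNIV. complex_of_real (\<sigma> $ k) * (\<Sum>\<mu>\<in>UNIV. M u \<mu> $ k $ n * cnj (M u \<mu> $ k $ n)))"
  by (simp add: V0_def kraus_def diag_conj_ketbra)

lemma second_derivative_cmod_sq_at_diag:
  fixes a0 a1 a2 c :: complex
  assumes "a0 = (if k = n then c else 0)"
  shows "a0 * cnj a2 + a1 * cnj a1 + (a1 * cnj a1 + a2 * cnj a0) =
    complex_of_real (2 * (cmod (cnj a1))\<^sup>2 + (if n = k then 2 * Re (c * cnj a2) else 0))"
  using assms by (auto simp: complex_eq_iff power2_eq_square cmod_def)

lemma V0_kraus_ketbra_second_derivative:
  fixes M :: "real \<Rightarrow> 'm::finite \<Rightarrow> complex^'n::finite^'n"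
  assumes smooth: "\<And>\<mu>. C2 (\<lambda>u. M u \<mu>)"
    and diag0: "\<And>\<mu>. M 0 \<mu> = diag_mat (c \<mu>)"
  shows "vector_derivative
           (\<lambda>v. vector_derivative (\<lambda>u. V0 \<sigma> (kraus M u (ketbra n))) (at v)) (at 0)
         = complex_of_real ((Rmat M c *v \<sigma>) $ n)"
proof -
  obtain f1 f2 where d1: "\<And>\<mu> u. ((\<lambda>u. M u \<mu>) has_vector_derivative f1 \<mu> u) (at u)"
    and d2: "\<And>\<mu> u. (f1 \<mu> has_vector_derivative f2 \<mu> u) (at u)"
    using smooth unfolding C2_def by metis
  define a where "a \<mu> k u = M u \<mu> $ k $ n" for \<mu> k u
  define a1 where "a1 \<mu> k u = f1 \<mu> u $ k $ n" for \<mu> k u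
  define a2 where "a2 \<mu> k u = f2 \<mu> u $ k $ n" for \<mu> k u
  have da: "(a \<mu> k has_vector_derivative a1 \<mu> k u) (at u)" for \<mu> k u
    unfolding a_def a1_def using bounded_linear.has_vector_derivative[OF bounded_linear_mat_nth d1]
    by simp
  have da1: "(a1 \<mu> k has_vector_derivative a2 \<mu> k u) (at u)" for \<mu> k u
    unfolding a1_def a2_def using bounded_linear.has_vector_derivative[OF bounded_linear_mat_nth d2]
    by simp
  define F1 where "F1 u = (\<Sum>k\<in>UNIV. complex_of_real (\<sigma> $ k) *
      (\<Sum>\<mu>\<in>UNIV. a \<mu> k u * cnj (a1 \<mu> k u) + a1 \<mu> k u * cnj (a \<mu> k u)))" for u
  define F2 where "F2 u = (\<Sum>k\<in>UNIV. complex_of_real (\<sigma> $ k) *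
      (\<Sum>\<mu>\<in>UNIV. (a \<mu> k u * cnj (a2 \<mu> k u) + a1 \<mu> k u * cnj (a1 \<mu> k u))
          + (a1 \<mu> k u * cnj (a1 \<mu> k u) + a2 \<mu> k u * cnj (a \<mu> k u))))" for u
  have dV: "((\<lambda>u. V0 \<sigma> (kraus M u (ketbra n))) has_vector_derivative F1 u) (at u)" for u
    unfolding V0_kraus_ketbra F1_def a_def[symmetric]
    by (intro has_vector_derivative_sum has_vector_derivative_mult_right
        has_vector_derivative_mult has_vector_derivative_cnj da)
  have dF1: "(F1 has_vector_derivative F2 u) (at u)" for u
    unfolding F1_def F2_def
    by (intro has_vector_derivative_sum has_vector_derivative_mult_right has_vector_derivative_add
        has_vector_derivative_mult has_vector_derivative_cnj da da1)
  have a0: "a \<mu> k 0 = (if k = n then c \<mu> n else 0)" for \<mu> k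
    by (simp add: a_def diag0 diag_mat_def)
  have dadj: "dadj1 M \<mu> $ n $ k = cnj (a1 \<mu> k 0)" "dadj2 M \<mu> $ n $ k = cnj (a2 \<mu> k 0)"
    for \<mu> k
    by (simp_all add: dadj1_eq[OF d1] dadj2_eq[OF d1 d2] cadj_def a1_def a2_def)
  have "(a \<mu> k 0 * cnj (a2 \<mu> k 0) + a1 \<mu> k 0 * cnj (a1 \<mu> k 0))
          + (a1 \<mu> k 0 * cnj (a1 \<mu> k 0) + a2 \<mu> k 0 * cnj (a \<mu> k 0))
     = complex_of_real (2 * (cmod (dadj1 M \<mu> $ n $ k))\<^sup>2
         + (if n = k then 2 * Re (c \<mu> n * dadj2 M \<mu> $ n $ k) else 0))" for \<mu> k
    unfolding dadj by (rule second_derivative_cmod_sq_at_diag[OF a0])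
  then have "F2 0 = complex_of_real ((Rmat M c *v \<sigma>) $ n)"
    unfolding F2_def
    by (simp add: matrix_vector_mult_def Rmat_def of_real_sum mult.commute)
  then show ?thesis using vector_derivative_twice[OF dV dF1] by simp
qed

lemma Rmat_offdiag_nonneg: "j \<noteq> k \<Longrightarrow> Rmat M c $ j $ k \<ge> 0"
  by (simp add: Rmat_def sum_nonneg)

lemma Rmat_row_sum_zero:
  fixes M :: "real \<Rightarrow> 'm::finite \<Rightarrow> complex^'n::finite^'n"
  assumes trace_pres: "\<And>u. (\<Sum>\<mu>\<in>UNIV. cadj (M u \<mu>) ** M u \<mu>) = mat 1"
    and smooth: "\<And>\<mu>. C2 (\<lambda>u. M u \<mu>)"
    and diag0: "\<And>\<mu>. M 0 \<mu> = diag_mat (c \<mu>)"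
  shows "(\<Sum>k\<in>UNIV. Rmat M c $ n $ k) = 0"
proof -
  have "(\<Sum>\<mu>\<in>UNIV. \<Sum>k\<in>UNIV. cnj (M u \<mu> $ k $ n) * M u \<mu> $ k $ n) = 1" for u
    using arg_cong[of _ _ "\<lambda>X. X $ n $ n", OF trace_pres[of u]]
    by (simp add: matrix_matrix_mult_def cadj_def mat_def)
  then have const: "V0 (\<chi> k. 1) (kraus M u (ketbra n)) = 1" for u
    unfolding V0_kraus_ketbra by (simp, subst sum.swap) (simp add: mult.commute)
  have "vector_derivative
          (\<lambda>v. vector_derivative (\<lambda>u. V0 (\<chi> k. 1) (kraus M u (ketbra n))) (at v)) (at 0) = 0"
    unfolding const by (rule vector_derivative_twice) (rule has_vector_derivative_const)+
  then have "complex_of_real ((Rmat M c *v (\<chi> k. 1)) $ n) = 0"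
    by (simp add: V0_kraus_ketbra_second_derivative[OF smooth diag0])
  then show ?thesis by (simp add: matrix_vector_mult_def flip: of_real_sum)
qed

lemma list_step_out_of_set:
  assumes "xs \<noteq> []" "hd xs \<in> S" "last xs \<notin> S"
  shows "\<exists>j. j + 1 < length xs \<and> xs ! j \<in> S \<and> xs ! (j + 1) \<notin> S"
  using assms
proof (induction xs)
  case Nil
  then show ?case by simp
next
  case (Cons x xs)
  then have "xs \<noteq> []" by auto
  show ?case
  proof (cases "hd xs \<in> S")
    case True
    then obtain j where "j + 1 < length xs" "xs ! j \<in> S" "xs ! (j + 1) \<notin> S"
      using Cons \<open>xs \<noteq> []\<close> by auto
    then show ?thesis by (intro exI[of _ "Suc j"]) simp
  next
    case False
    then show ?thesis using Cons.prems \<open>xs \<noteq> []\<close> by (intro exI[of _ 0]) (simp add: hd_conv_nth)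
  qed
qed

lemma strongly_connected_edge_out_of_set:
  assumes "strongly_connected R" "a \<in> S" "b \<notin> S"
  obtains i j where "i \<in> S" "j \<notin> S" "R $ i $ j \<noteq> 0"
proof -
  obtain ps where ps: "ps \<noteq> []" "hd ps = a" "last ps = b"
    and edges: "\<forall>j. j + 1 < length ps \<longrightarrow> R $ (ps ! j) $ (ps ! (j + 1)) \<noteq> 0"
    using assms unfolding strongly_connected_def by (metis (full_types))
  then obtain j where "j + 1 < length ps" "ps ! j \<in> S" "ps ! (j + 1) \<notin> S"
    using list_step_out_of_set[of ps S] assms by auto
  then show ?thesis using edges that by blast
qed

lemma mult_vec_pinned_combination:
  fixes R :: "real^'n::finite^'n"
  assumes s: "\<And>k j. j \<noteq> nb \<Longrightarrow> (R *v s k) $ j = (if j = k then -1 else 0)"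
  shows "R *v (\<Sum>k\<in>UNIV - {nb}. (- lam k) *\<^sub>R s k) =
    (\<chi> n. if n = nb then - (\<Sum>k\<in>UNIV - {nb}. (R *v s k) $ nb * lam k) else lam n)"
proof -
  have sum: "R *v (\<Sum>k\<in>UNIV - {nb}. (- lam k) *\<^sub>R s k) = (\<Sum>k\<in>UNIV - {nb}. (- lam k) *\<^sub>R (R *v s k))"
    by (simp add: linear_sum[OF matrix_vector_mul_linear] linear_scale[OF matrix_vector_mul_linear]
        linear_neg[OF matrix_vector_mul_linear])
  have "(\<Sum>k\<in>UNIV - {nb}. - (lam k * (R *v s k) $ j)) = lam j" if "j \<noteq> nb" for j
  proof -
    have "(\<Sum>k\<in>UNIV - {nb}. - (lam k * (R *v s k) $ j)) = (\<Sum>k\<in>UNIV - {nb}. if k = j then lam j else 0)"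
      by (rule sum.cong) (auto simp: s[OF that])
    then show ?thesis using that by simp
  qed
  then show ?thesis unfolding sum by (auto simp: vec_eq_iff sum_negf mult.commute)
qed

locale rate_matrix =
  fixes R :: "real^'n::finite^'n"
  assumes offdiag_nonneg: "j \<noteq> k \<Longrightarrow> R $ j $ k \<ge> 0"
    and row_sum_zero: "(\<Sum>k\<in>UNIV. R $ j $ k) = 0"
begin

lemma mult_vec_eq_sum_diff: "(R *v \<sigma>) $ i = (\<Sum>j\<in>UNIV. R $ i $ j * (\<sigma> $ j - \<sigma> $ i))"
proof -
  have "(\<Sum>j\<in>UNIV. R $ i $ j * (\<sigma> $ j - \<sigma> $ i)) =
      (\<Sum>j\<in>UNIV. R $ i $ j * \<sigma> $ j) - (\<Sum>j\<in>UNIV. R $ i $ j) * \<sigma> $ i"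
    by (simp add: right_diff_distrib sum_subtractf sum_distrib_right)
  then show ?thesis using row_sum_zero[of i] by (simp add: matrix_vector_mult_def)
qed

lemma mult_vec_terms_nonneg_at_min:
  assumes "\<And>j. \<sigma> $ i \<le> \<sigma> $ j"
  shows "0 \<le> R $ i $ j * (\<sigma> $ j - \<sigma> $ i)"
  using offdiag_nonneg[of i j] assms[of j] by (cases "i = j") auto

lemma mult_vec_nonneg_at_min:
  assumes "\<And>j. \<sigma> $ i \<le> \<sigma> $ j"
  shows "0 \<le> (R *v \<sigma>) $ i"
  unfolding mult_vec_eq_sum_diff
  by (intro sum_nonneg mult_vec_terms_nonneg_at_min assms)

lemma mult_vec_pos_at_min:
  assumes min: "\<And>j. \<sigma> $ i \<le> \<sigma> $ j"
    and edge: "R $ i $ j \<noteq> 0" and "\<sigma> $ j \<noteq> \<sigma> $ i"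
  shows "0 < (R *v \<sigma>) $ i"
proof -
  have "i \<noteq> j" using \<open>\<sigma> $ j \<noteq> \<sigma> $ i\<close> by auto
  then have "0 < R $ i $ j" using offdiag_nonneg[of i j] edge by simp
  moreover have "\<sigma> $ i < \<sigma> $ j" using min[of j] \<open>\<sigma> $ j \<noteq> \<sigma> $ i\<close> by simp
  ultimately have "0 < R $ i $ j * (\<sigma> $ j - \<sigma> $ i)" by simp
  also have "\<dots> \<le> (R *v \<sigma>) $ i"
    unfolding mult_vec_eq_sum_diff
    by (rule member_le_sum) (auto intro: mult_vec_terms_nonneg_at_min min)
  finally show ?thesis .
qed

end

locale irreducible_rate_matrix = rate_matrix +
  assumes strongly_connected: "strongly_connected R"
begin

lemma minimum_principle:
  assumes pin: "\<sigma> $ nb = 0" and sub: "\<And>k. k \<noteq> nb \<Longrightarrow> (R *v \<sigma>) $ k \<le> 0"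
  shows "0 \<le> \<sigma> $ k"
proof (rule ccontr)
  assume "\<not> 0 \<le> \<sigma> $ k"
  have "Min (range (($) \<sigma>)) \<in> range (($) \<sigma>)" by (rule Min_in) auto
  then obtain k0 where k0_Min: "\<sigma> $ k0 = Min (range (($) \<sigma>))" by (metis imageE)
  have k0: "\<sigma> $ k0 \<le> \<sigma> $ j" for j unfolding k0_Min by (rule Min_le) auto
  have neg: "\<sigma> $ k0 < 0"
    using k0[of k] \<open>\<not> 0 \<le> \<sigma> $ k\<close> by simp
  obtain i j where i: "\<sigma> $ i = \<sigma> $ k0" and "\<sigma> $ j \<noteq> \<sigma> $ k0" and "R $ i $ j \<noteq> 0"
    using strongly_connected_edge_out_of_set[OF strongly_connected, of k0 "{j. \<sigma> $ j = \<sigma> $ k0}" nb]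
      pin neg by auto
  then have "0 < (R *v \<sigma>) $ i"
    by (intro mult_vec_pos_at_min) (use k0 in auto)
  moreover have "i \<noteq> nb" using i pin neg by auto
  ultimately show False using sub by fastforce
qed

lemma strict_minimum_principle:
  assumes pin: "\<sigma> $ nb = 0" and neg: "\<And>k. k \<noteq> nb \<Longrightarrow> (R *v \<sigma>) $ k < 0"
    and "k \<noteq> nb"
  shows "0 < \<sigma> $ k"
proof -
  have nonneg: "0 \<le> \<sigma> $ j" for j
    by (rule minimum_principle[OF pin]) (use neg in fastforce)
  have "\<not> 0 \<le> (R *v \<sigma>) $ k" using neg[OF \<open>k \<noteq> nb\<close>] by simp
  then have "\<sigma> $ k \<noteq> 0" using mult_vec_nonneg_at_min[of \<sigma> k] nonneg by auto
  then show ?thesis using nonneg[of k] by simp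
qed

lemma mult_vec_pos_at_pin:
  assumes pin: "\<sigma> $ nb = 0" and sub: "\<And>k. k \<noteq> nb \<Longrightarrow> (R *v \<sigma>) $ k \<le> 0"
    and "\<sigma> \<noteq> 0"
  shows "0 < (R *v \<sigma>) $ nb"
proof -
  have nonneg: "0 \<le> \<sigma> $ j" for j by (rule minimum_principle[OF pin sub])
  obtain n where "\<sigma> $ n \<noteq> 0" using \<open>\<sigma> \<noteq> 0\<close> by (auto simp: vec_eq_iff)
  then obtain i j where "\<sigma> $ i = 0" "\<sigma> $ j \<noteq> 0" and "R $ i $ j \<noteq> 0"
    using strongly_connected_edge_out_of_set[OF strongly_connected, of nb "{j. \<sigma> $ j = 0}" n]
      pin by auto
  then have "0 < (R *v \<sigma>) $ i"
    by (intro mult_vec_pos_at_min) (use nonneg in auto)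
  then have "i = nb" using sub by fastforce
  with \<open>0 < (R *v \<sigma>) $ i\<close> show ?thesis by simp
qed

lemma pinned_solution_unique:
  assumes "\<sigma> $ nb = \<tau> $ nb" and "\<And>k. k \<noteq> nb \<Longrightarrow> (R *v \<sigma>) $ k = (R *v \<tau>) $ k"
  shows "\<sigma> = \<tau>"
proof -
  have "0 \<le> (\<sigma> - \<tau>) $ k" "0 \<le> (\<tau> - \<sigma>) $ k" for k
    by (rule minimum_principle[of _ nb];
        simp add: assms matrix_vector_mult_diff_distrib)+
  then show ?thesis by (simp add: vec_eq_iff order.antisym)
qed

text \<open>Existence follows from uniqueness by finite dimension.\<close>
lemma pinned_solution_exists:
  "\<exists>\<sigma>. \<sigma> $ nb = 0 \<and> (\<forall>k. k \<noteq> nb \<longrightarrow> (R *v \<sigma>) $ k = b $ k)"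
proof -
  define L where "L \<sigma> = (\<chi> k. if k = nb then \<sigma> $ nb else (R *v \<sigma>) $ k)" for \<sigma>
  have "linear L"
    by (auto simp: linear_iff L_def vec_eq_iff matrix_vector_right_distrib
        matrix_vector_mult_scaleR)
  moreover have "inj L"
  proof (rule injI)
    fix \<sigma> \<tau> assume eq: "L \<sigma> = L \<tau>"
    show "\<sigma> = \<tau>"
    proof (rule pinned_solution_unique[of _ nb])
      show "\<sigma> $ nb = \<tau> $ nb" using arg_cong[OF eq, of "\<lambda>v. v $ nb"] by (simp add: L_def)
      show "(R *v \<sigma>) $ k = (R *v \<tau>) $ k" if "k \<noteq> nb" for k
        using arg_cong[OF eq, of "\<lambda>v. v $ k"] that by (simp add: L_def)
    qed
  qed
  ultimately obtain \<sigma> where "L \<sigma> = (\<chi> k. if k = nb then 0 else b $ k)"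
    using linear_inj_imp_surj by (metis surjD)
  then show ?thesis by (intro exI[of _ \<sigma>]) (auto simp: L_def vec_eq_iff split: if_splits dest: spec)
qed

lemma pinned_system:
  "\<exists>e. (\<forall>n. n \<noteq> nb \<longrightarrow> e n > 0) \<and>
    (\<forall>lam.
       let \<Lambda> = (\<chi> n. if n = nb then - (\<Sum>k\<in>UNIV - {nb}. e k * lam k) else lam n) in
       (\<exists>!\<sigma>. \<sigma> $ nb = 0 \<and> R *v \<sigma> = \<Lambda>) \<and>
       ((\<forall>n. n \<noteq> nb \<longrightarrow> lam n < 0) \<longrightarrow>
          (\<forall>\<sigma>. \<sigma> $ nb = 0 \<and> R *v \<sigma> = \<Lambda> \<longrightarrow> (\<forall>n. n \<noteq> nb \<longrightarrow> \<sigma> $ n > 0))))"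
proof -
  have "\<forall>k. \<exists>\<sigma>. \<sigma> $ nb = 0 \<and> (\<forall>j. j \<noteq> nb \<longrightarrow> (R *v \<sigma>) $ j = (if j = k then -1 else 0))"
    using pinned_solution_exists[of nb "\<chi> j. if j = _ then -1 else 0"] by simp
  then obtain s where s_pin: "\<And>k. s k $ nb = 0"
    and s: "\<And>k j. j \<noteq> nb \<Longrightarrow> (R *v s k) $ j = (if j = k then -1 else 0)"
    by metis
  define e where "e k = (R *v s k) $ nb" for k
  have "e k > 0" if "k \<noteq> nb" for k
  proof -
    have "s k \<noteq> 0" using s[OF that, of k] by auto
    then show ?thesis unfolding e_def by (intro mult_vec_pos_at_pin[OF s_pin]) (simp_all add: s)
  qed
  moreover have "(\<exists>!\<sigma>. \<sigma> $ nb = 0 \<and> R *v \<sigma> = \<Lambda>) \<and>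
       ((\<forall>n. n \<noteq> nb \<longrightarrow> lam n < 0) \<longrightarrow>
          (\<forall>\<sigma>. \<sigma> $ nb = 0 \<and> R *v \<sigma> = \<Lambda> \<longrightarrow> (\<forall>n. n \<noteq> nb \<longrightarrow> \<sigma> $ n > 0)))"
    if \<Lambda>: "\<Lambda> = (\<chi> n. if n = nb then - (\<Sum>k\<in>UNIV - {nb}. e k * lam k) else lam n)" for lam \<Lambda>
  proof -
    define \<tau> where "\<tau> = (\<Sum>k\<in>UNIV - {nb}. (- lam k) *\<^sub>R s k)"
    have "\<tau> $ nb = 0" "R *v \<tau> = \<Lambda>"
      using mult_vec_pinned_combination[where nb = nb and lam = lam, OF s]
      unfolding \<tau>_def \<Lambda> e_def by (simp_all add: s_pin)
    moreover have "\<sigma> = \<tau>" if "\<sigma> $ nb = 0" "R *v \<sigma> = R *v \<tau>" for \<sigma>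
      using that \<open>\<tau> $ nb = 0\<close> by (intro pinned_solution_unique[of _ nb]) auto
    moreover have "\<sigma> $ n > 0"
      if "\<forall>n. n \<noteq> nb \<longrightarrow> lam n < 0" "\<sigma> $ nb = 0" "R *v \<sigma> = \<Lambda>" "n \<noteq> nb" for \<sigma> n
      using that by (intro strict_minimum_principle[of _ nb]) (auto simp: \<Lambda>)
    ultimately show ?thesis by metis
  qed
  ultimately show ?thesis by (intro exI[of _ e]) (simp add: Let_def)
qed

end

theorem lemma2:
  fixes M :: "real \<Rightarrow> 'm::finite \<Rightarrow> complex^'n::finite^'n"
    and c :: "'m \<Rightarrow> 'n \<Rightarrow> complex"
    and nb :: 'n
  assumes d2: "CARD('n) \<ge> 2"
    and trace_pres: "\<And>u. (\<Sum>\<mu>\<in>UNIV. cadj (M u \<mu>) ** M u \<mu>) = mat 1"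
    and smooth: "\<And>\<mu>. C2 (\<lambda>u. M u \<mu>)"
    and diag0: "\<And>\<mu>. M 0 \<mu> = diag_mat (c \<mu>)"
    and conn: "strongly_connected (Rmat M c)"
  shows "\<exists>e :: 'n \<Rightarrow> real. (\<forall>n. n \<noteq> nb \<longrightarrow> e n > 0) \<and>
    (\<forall>lam :: 'n \<Rightarrow> real.
       let \<Lambda> = (\<chi> n. if n = nb then - (\<Sum>k\<in>UNIV - {nb}. e k * lam k) else lam n) in
       (\<exists>!\<sigma> :: real^'n. \<sigma> $ nb = 0 \<and> Rmat M c *v \<sigma> = \<Lambda>) \<and>
       ((\<forall>n. n \<noteq> nb \<longrightarrow> lam n < 0) \<longrightarrow>
          (\<forall>\<sigma> :: real^'n. \<sigma> $ nb = 0 \<and> Rmat M c *v \<sigma> = \<Lambda> \<longrightarrow>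
              (\<forall>n. n \<noteq> nb \<longrightarrow> \<sigma> $ n > 0)))) \<and>
    (\<forall>\<sigma> \<Lambda> :: real^'n. Rmat M c *v \<sigma> = \<Lambda> \<longrightarrow>
       (\<forall>n. vector_derivative
              (\<lambda>v. vector_derivative (\<lambda>u. V0 \<sigma> (kraus M u (ketbra n))) (at v)) (at 0)
            = complex_of_real (\<Lambda> $ n)))"
proof -
  interpret irreducible_rate_matrix "Rmat M c"
    by unfold_locales
      (auto intro: Rmat_offdiag_nonneg Rmat_row_sum_zero[OF trace_pres smooth diag0] conn)
  show ?thesis
    using pinned_system[of nb] by (simp add: V0_kraus_ketbra_second_derivative[OF smooth diag0])
qed

end
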